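(* Let $k\geq 2$, let $\mathbb Z_0=\mathbb Z\setminus\{0\}$ and let $\{\lambda_j\}_{j\in\mathbb Z_0}$ be positive numbers. If there are sequences of positive numbers $z=\{z_j\}_{j\in\mathbb Z_0}$, $\tilde z=\{\tilde z_j\}_{j\in\mathbb Z_0}$ satisfying $$z_i=\lambda_i\Bigl(\frac{1}{1+\sum_{j\in\mathbb Z_0}\tilde z_j}\Bigr)^{k},\qquad \tilde z_i=\lambda_i\Bigl(\frac{1}{1+\sum_{j\in\mathbb Z_0}z_j}\Bigr)^{k},\qquad i\in\mathbb Z_0,$$ then the series $\sum_{j\in\mathbb Z_0}z_j$, $\sum_{j\in\mathbb Z_0}\tilde z_j$ and $\sum_{j\in\mathbb Z_0}\lambda_j$ all converge.
   Context: If one of the sums $\sum_j z_j$, $\sum_j\tilde z_j$ is $+\infty$, the corresponding right-hand side is interpreted as $0$. *)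

theory Defs
  imports "HOL-Analysis.Analysis"
begin

definition Z0 :: "int set" where "Z0 = UNIV - {0}"

text \<open>The quantity 1/(1 + sum_j w_j), where a divergent sum (= +infinity for positive
terms) is interpreted as giving 0.\<close>
definition recip_sum :: "(int \<Rightarrow> real) \<Rightarrow> real" where
  "recip_sum w = (if w summable_on Z0 then 1 / (1 + infsum w Z0) else 0)"

end

theory Submission
  imports Defs
begin

text \<open>Since a divergent sum makes the factor \<open>1/(1 + \<Sum>\<^sub>j w\<^sub>j)\<close> vanish, positivity of \<open>z\<close>
  forces \<open>\<Sum>\<^sub>j \<tilde>z\<^sub>j\<close> to converge, and symmetrically positivity of \<open>\<tilde>z\<close> forces \<open>\<Sum>\<^sub>j z\<^sub>j\<close>
  to converge. Then \<open>\<lambda>\<^sub>j = \<tilde>z\<^sub>j (1 + \<Sum>\<^sub>i z\<^sub>i)\<^sup>k\<close> is a constant multiple of a summable family.\<close>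

lemma summable_on_Z0_if_recip_sum_nonzero:
  assumes "recip_sum w \<noteq> 0"
  shows "w summable_on Z0"
  using assms by (auto simp: recip_sum_def split: if_splits)

lemma summable_on_if_scaled_summable:
  fixes f g :: "'a \<Rightarrow> real"
  assumes "c \<noteq> 0" and "\<And>i. i \<in> A \<Longrightarrow> f i = g i * c" and "f summable_on A"
  shows "g summable_on A"
proof -
  have "(\<lambda>i. g i * c) summable_on A"
    using assms(2,3) summable_on_cong[of A f "\<lambda>i. g i * c"] by simp
  then show ?thesis
    by (rule iffD1[OF summable_on_cmult_left'[OF assms(1)]])
qed

theorem mainTheorem4:
  fixes k :: nat and lam z zt :: "int \<Rightarrow> real"
  assumes "k \<ge> 2"
    and "\<forall>j\<in>Z0. lam j > 0"
    and "\<forall>j\<in>Z0. z j > 0"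
    and "\<forall>j\<in>Z0. zt j > 0"
    and "\<forall>i\<in>Z0. z i = lam i * (recip_sum zt) ^ k"
    and "\<forall>i\<in>Z0. zt i = lam i * (recip_sum z) ^ k"
  shows "z summable_on Z0 \<and> zt summable_on Z0 \<and> lam summable_on Z0"
proof -
  have one_in_Z0: "(1::int) \<in> Z0" by (simp add: Z0_def)
  have k_pos: "k > 0" using assms(1) by simp
  have "0 < lam 1 * recip_sum zt ^ k" using assms(3,5) one_in_Z0 by force
  then have zt_factor: "recip_sum zt \<noteq> 0" using k_pos by (auto simp: zero_power)
  have "0 < lam 1 * recip_sum z ^ k" using assms(4,6) one_in_Z0 by force
  then have z_factor: "recip_sum z \<noteq> 0" using k_pos by (auto simp: zero_power)
  have zt_summable: "zt summable_on Z0"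
    using zt_factor by (rule summable_on_Z0_if_recip_sum_nonzero)
  moreover have "z summable_on Z0"
    using z_factor by (rule summable_on_Z0_if_recip_sum_nonzero)
  moreover have "lam summable_on Z0"
    using z_factor assms(6) zt_summable
    by (intro summable_on_if_scaled_summable[of "recip_sum z ^ k" Z0 zt lam]) auto
  ultimately show ?thesis by simp
qed

end
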